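(* For all integers $\alpha\ge0$, \[ \sum_{n=0}^{\infty}b_{5}\!\left(4\cdot5^{2\alpha}n+\frac{7\cdot 5^{2\alpha}-1}{6}\right)q^{n} \equiv f(-q^2)f(-q^5) \pmod 2. \]
   Context: For a positive integer $\ell$, $b_\ell(n)$ denotes the number of partitions of $n$ having no part divisible by $\ell$. $f(-q)=\prod_{k\ge1}(1-q^k)$. A congruence between power series modulo $2$ means coefficientwise congruence. *)

theory Defs
  imports "HOL-Library.Multiset" "HOL-Computational_Algebra.Formal_Power_Series" "HOL-Number_Theory.Cong"
begin

definition b :: "nat \<Rightarrow> nat \<Rightarrow> nat" where
  "b l n = card {M :: nat multiset. (\<forall>x\<in>#M. 0 < x \<and> \<not> l dvd x) \<and> sum_mset M = n}"

text \<open>Truncation of f(-q^a) = prod_{k>=1} (1 - q^(a k)) to the factors k = 1..N.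
  For a >= 1 and N >= n its n-th coefficient agrees with that of the infinite product.\<close>
definition euler_trunc :: "nat \<Rightarrow> nat \<Rightarrow> int fps" where
  "euler_trunc a N = (\<Prod>k\<in>{1..N}. 1 - fps_X ^ (a * k))"

definition fprod_coeff :: "nat \<Rightarrow> nat \<Rightarrow> nat \<Rightarrow> int" where
  "fprod_coeff a c n = fps_nth (euler_trunc a n * euler_trunc c n) n"

end

theory Submission
  imports Defs "HOL-Library.Z2" "HOL-Computational_Algebra.Primes"
begin

text \<open>Work modulo 2 and write $F = f(-q)$. If $B$ is the generating function of $b_5$, then
  $B F = F(q^5)$, and since squaring is additive, $F^4 = F(q^4)$; hence
  $B \cdot F(q^4) = F(q^5) F^3$. Euler's pentagonal theorem and Jacobi's identity, both read off
  from a finite form of the Jacobi triple product, give $F = \sum_j q^{P(j)}$ and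
  $F^3 = \sum_{k \ge 0} q^{T(k)}$, so the coefficient of $q^N$ in $F(q^5) F^3$ is the number of
  solutions of $5P(j) + T(k) = N$. A linear substitution preserving the quadratic form shows
  that this number is the same for $N = 4m + 1$ and $N = m$; taking the coefficients of index
  $\equiv 1 \pmod 4$ therefore gives $\sum_n b_5(4n+1) q^n = F(q^2) F(q^5)$. Finally
  $(i, j) \mapsto (1 - 5i, 1 - 5j)$ matches the solutions of $2P(i) + 5P(j) = m$ with those of
  $2P(i) + 5P(j) = 25m + 7$, which is the step from $\alpha$ to $\alpha + 1$.\<close>

unbundle fps_syntax

section \<open>Gaussian binomial coefficients\<close>

fun qbinom :: "'a::comm_ring_1 \<Rightarrow> nat \<Rightarrow> nat \<Rightarrow> 'a" where
  "qbinom Q 0 k = (if k = 0 then 1 else 0)"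
| "qbinom Q (Suc m) 0 = 1"
| "qbinom Q (Suc m) (Suc k) = qbinom Q m k + Q ^ Suc k * qbinom Q m (Suc k)"

definition qpoch :: "'a::comm_ring_1 \<Rightarrow> nat \<Rightarrow> 'a" where
  "qpoch Q n = (\<Prod>i\<in>{1..n}. 1 - Q ^ i)"

lemma qpoch_0 [simp]: "qpoch Q 0 = 1"
  by (simp add: qpoch_def)

lemma qpoch_Suc: "qpoch Q (Suc n) = qpoch Q n * (1 - Q ^ Suc n)"
  by (simp add: qpoch_def prod.nat_ivl_Suc')

lemma qpoch_split: "a \<le> c \<Longrightarrow> qpoch Q c = qpoch Q a * (\<Prod>l\<in>{Suc a..c}. 1 - Q ^ l)"
proof -
  assume "a \<le> c"
  then have "{1..c} = {1..a} \<union> {Suc a..c}" by auto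
  then show ?thesis unfolding qpoch_def by (simp add: prod.union_disjoint)
qed

lemma power_add_eq: "i + j = k + l \<Longrightarrow> (x::'a::monoid_mult) ^ i * x ^ j = x ^ k * x ^ l"
  by (simp flip: power_add)

lemma qbinom_0 [simp]: "qbinom Q m 0 = 1"
  by (cases m) auto

lemma qbinom_eq_0: "m < k \<Longrightarrow> qbinom Q m k = 0"
proof (induction m arbitrary: k)
  case (Suc m) then show ?case by (cases k) auto
qed simp

lemma qbinom_Suc_Suc':
  "k \<le> m \<Longrightarrow> qbinom Q (Suc m) (Suc k) = Q ^ (m - k) * qbinom Q m k + qbinom Q m (Suc k)"
proof (induction m arbitrary: k)
  case (Suc m)
  show ?case
  proof (cases k)
    case 0
    then show ?thesis using Suc.IH[of 0] by (simp add: algebra_simps)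
  next
    case (Suc k')
    with Suc.prems have k': "k' \<le> m" by simp
    show ?thesis
    proof (cases "k' = m")
      case True
      then show ?thesis using Suc by (simp add: qbinom_eq_0)
    next
      case False
      then have k2: "Suc k' \<le> m" using k' by simp
      have "qbinom Q (Suc (Suc m)) (Suc k)
          = qbinom Q (Suc m) (Suc k') + Q ^ Suc (Suc k') * qbinom Q (Suc m) (Suc (Suc k'))"
        using Suc by simp
      also have "\<dots> = Q ^ (m - k') * qbinom Q m k' + qbinom Q m (Suc k')
          + (Q ^ Suc (Suc k') * Q ^ (m - Suc k')) * qbinom Q m (Suc k')
          + Q ^ Suc (Suc k') * qbinom Q m (Suc (Suc k'))"
        unfolding Suc.IH[OF k'] Suc.IH[OF k2] by (simp add: algebra_simps)
      also have "Q ^ Suc (Suc k') * Q ^ (m - Suc k') = Q ^ (m - k') * Q ^ Suc k'"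
        using k2 by (intro power_add_eq) simp
      also have "Q ^ (m - k') * qbinom Q m k' + qbinom Q m (Suc k')
          + (Q ^ (m - k') * Q ^ Suc k') * qbinom Q m (Suc k')
          + Q ^ Suc (Suc k') * qbinom Q m (Suc (Suc k'))
          = Q ^ (Suc m - k) * qbinom Q (Suc m) k + qbinom Q (Suc m) (Suc k)"
        using Suc by (simp add: algebra_simps)
      finally show ?thesis .
    qed
  qed
qed simp

lemma qbinom_qpoch: "k \<le> m \<Longrightarrow> qbinom Q m k * qpoch Q k * qpoch Q (m - k) = qpoch Q m"
proof (induction m arbitrary: k)
  case (Suc m)
  show ?case
  proof (cases k)
    case (Suc k')
    then have k': "k' \<le> m" using Suc.prems by simp
    have A: "qbinom Q m k' * qpoch Q (Suc k') * qpoch Q (m - k') = qpoch Q m * (1 - Q ^ Suc k')"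
      unfolding qpoch_Suc Suc.IH[OF k', symmetric] by (simp only: ac_simps)
    have B: "Q ^ Suc k' * qbinom Q m (Suc k') * qpoch Q (Suc k') * qpoch Q (m - k')
        = qpoch Q m * (Q ^ Suc k' - Q ^ Suc m)"
    proof (cases "k' = m")
      case False
      then have k2: "Suc k' \<le> m" using k' by simp
      have m: "m - k' = Suc (m - Suc k')" using k2 by simp
      have "Q ^ Suc k' * qbinom Q m (Suc k') * qpoch Q (Suc k') * qpoch Q (m - k')
          = Q ^ Suc k' * (qbinom Q m (Suc k') * qpoch Q (Suc k') * qpoch Q (m - Suc k'))
            * (1 - Q ^ Suc (m - Suc k'))"
        unfolding m by (simp add: qpoch_Suc algebra_simps)
      also have "\<dots> = qpoch Q m * (Q ^ Suc k' - Q ^ Suc k' * Q ^ Suc (m - Suc k'))"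
        using Suc.IH[OF k2] by (simp add: algebra_simps)
      also have "Q ^ Suc k' * Q ^ Suc (m - Suc k') = Q ^ Suc m * Q ^ 0"
        using k2 by (intro power_add_eq) simp
      finally show ?thesis by simp
    qed (simp add: qbinom_eq_0)
    have "qbinom Q (Suc m) k * qpoch Q k * qpoch Q (Suc m - k)
        = qbinom Q m k' * qpoch Q (Suc k') * qpoch Q (m - k')
          + Q ^ Suc k' * qbinom Q m (Suc k') * qpoch Q (Suc k') * qpoch Q (m - k')"
      using Suc by (simp add: algebra_simps)
    also have "\<dots> = qpoch Q m * (1 - Q ^ Suc m)"
      unfolding A B by (simp add: algebra_simps)
    finally show ?thesis by (simp add: qpoch_Suc)
  qed simp
qed simp

lemma qbinom_two_steps_1: "qbinom Q (Suc (Suc m)) (Suc 0) = 1 + Q * qbinom Q m (Suc 0) + Q ^ Suc m"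
  using qbinom_Suc_Suc'[of 0 "Suc m" Q] by simp

lemma qbinom_two_steps:
  "qbinom Q (Suc (Suc m)) (Suc (Suc c))
     = (1 + Q ^ Suc m) * qbinom Q m (Suc c) + Q ^ (c + 2) * qbinom Q m (c + 2) + Q ^ (m - c) * qbinom Q m c"
proof (cases "Suc c \<le> m")
  case True
  have "qbinom Q (Suc (Suc m)) (Suc (Suc c))
      = qbinom Q (Suc m) (Suc c) + Q ^ Suc (Suc c) * qbinom Q (Suc m) (Suc (Suc c))"
    by (simp only: qbinom.simps)
  also have "\<dots> = Q ^ (m - c) * qbinom Q m c + qbinom Q m (Suc c)
        + (Q ^ Suc (Suc c) * Q ^ (m - Suc c)) * qbinom Q m (Suc c) + Q ^ Suc (Suc c) * qbinom Q m (Suc (Suc c))"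
    using True by (simp only: qbinom_Suc_Suc' Suc_leD distrib_left mult.assoc add.assoc)
  also have "Q ^ Suc (Suc c) * Q ^ (m - Suc c) = Q ^ Suc m * Q ^ 0"
    using True by (intro power_add_eq) simp
  finally show ?thesis by (simp add: algebra_simps)
qed (auto simp: qbinom_eq_0 le_Suc_eq)

section \<open>A finite form of the Jacobi triple product\<close>

definition tri :: "int \<Rightarrow> nat" where
  "tri j = nat (j * (j + 1) div 2)"

lemma two_tri: "2 * int (tri j) = j * (j + 1)"
proof -
  have "0 \<le> j * (j + 1)"
    by (cases "j \<ge> 0") (auto simp: mult_nonpos_nonpos)
  then show ?thesis by (simp add: tri_def)
qed

lemma tri_add_one: "int (tri (j + 1)) = int (tri j) + j + 1"
  using two_tri[of j] two_tri[of "j + 1"] by (simp add: algebra_simps)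

lemma tri_minus_one_minus: "tri (-1 - j) = tri j"
  using two_tri[of j] two_tri[of "-1 - j"] by (simp add: algebra_simps)

definition triple_coeff :: "'a::comm_ring_1 \<Rightarrow> nat \<Rightarrow> nat \<Rightarrow> 'a" where
  "triple_coeff Q n i = qbinom Q (2 * n) i * Q ^ tri (int n - int i)"

lemma triple_coeff_eq_0: "2 * n < i \<Longrightarrow> triple_coeff Q n i = 0"
  by (simp add: triple_coeff_def qbinom_eq_0)

definition shift_seq :: "(nat \<Rightarrow> 'a::zero) \<Rightarrow> nat \<Rightarrow> 'a" where
  "shift_seq f i = (if i = 0 then 0 else f (i - 1))"

lemma sum_shift_seq: "(\<Sum>i\<le>Suc N. shift_seq f i * y ^ i) = y * (\<Sum>i\<le>N. f i * (y::'a::comm_ring_1) ^ i)"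
  unfolding sum.atMost_Suc_shift
  by (simp add: shift_seq_def sum_distrib_left algebra_simps del: sum.atMost_Suc)

lemma triple_coeff_Suc:
  "triple_coeff Q (Suc n) i = Q ^ Suc n * triple_coeff Q n i
     + (1 + Q ^ (2 * n + 1)) * shift_seq (triple_coeff Q n) i
     + Q ^ n * shift_seq (shift_seq (triple_coeff Q n)) i" (is "_ = ?rhs")
proof -
  have pow: "Q ^ u * Q ^ tri (j + 1) = Q ^ v * Q ^ tri j" if "int u + j + 1 = int v" for u v j
    using that tri_add_one[of j] by (intro power_add_eq) linarith
  consider "i = 0" | "i = 1" | c where "i = Suc (Suc c)"
    by (metis One_nat_def not0_implies_Suc)
  then show ?thesis
  proof cases
    case 1
    then show ?thesis using pow[of 0 "int n" "Suc n"] by (simp add: triple_coeff_def shift_seq_def add.commute)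
  next
    case 2
    have "triple_coeff Q (Suc n) i = (1 + Q * qbinom Q (2 * n) 1 + Q ^ Suc (2 * n)) * Q ^ tri (int n)"
      using 2 by (simp add: triple_coeff_def qbinom_two_steps_1 del: qbinom.simps)
    also have "\<dots> = (Q * Q ^ tri (int n)) * qbinom Q (2 * n) 1 + (1 + Q ^ (2 * n + 1)) * Q ^ tri (int n)"
      by (simp add: algebra_simps)
    also have "Q * Q ^ tri (int n) = Q ^ Suc n * Q ^ tri (int n - 1)"
      using pow[of 1 "int n - 1" "Suc n"] by simp
    finally show ?thesis
      using 2 by (simp add: triple_coeff_def shift_seq_def mult.assoc)
  next
    case 3
    define j where "j = int n - int c - 1"
    have j: "int (Suc n) - int i = j" "int n - int (Suc c) = j"
      "int n - int (Suc (Suc c)) = j - 1" "int n - int c = j + 1"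
      using 3 by (simp_all add: j_def)
    have "triple_coeff Q (Suc n) i = qbinom Q (Suc (Suc (2 * n))) (Suc (Suc c)) * Q ^ tri j"
      unfolding triple_coeff_def j(1) by (simp add: 3 del: qbinom.simps)
    also have "\<dots> = (1 + Q ^ (2 * n + 1)) * (qbinom Q (2 * n) (Suc c) * Q ^ tri j)
        + (Q ^ (c + 2) * Q ^ tri j) * qbinom Q (2 * n) (Suc (Suc c))
        + Q ^ (2 * n - c) * Q ^ tri j * qbinom Q (2 * n) c"
      unfolding qbinom_two_steps by (simp add: algebra_simps)
    also have "Q ^ (c + 2) * Q ^ tri j = Q ^ Suc n * Q ^ tri (j - 1)"
      using pow[of "c + 2" "j - 1" "Suc n"] by (simp add: j_def)
    also have "Q ^ (2 * n - c) * Q ^ tri j * qbinom Q (2 * n) c = Q ^ n * Q ^ tri (j + 1) * qbinom Q (2 * n) c"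
      using pow[of n j "2 * n - c"] by (cases "c \<le> 2 * n") (auto simp: j_def qbinom_eq_0)
    also have "(1 + Q ^ (2 * n + 1)) * (qbinom Q (2 * n) (Suc c) * Q ^ tri j)
        + Q ^ Suc n * Q ^ tri (j - 1) * qbinom Q (2 * n) (Suc (Suc c))
        + Q ^ n * Q ^ tri (j + 1) * qbinom Q (2 * n) c = ?rhs"
      using 3 by (simp add: shift_seq_def triple_coeff_def j_def algebra_simps)
    finally show ?thesis .
  qed
qed

lemma sum_atMost_vanishing:
  assumes "\<And>i. N < i \<Longrightarrow> f i = 0" "N \<le> M"
  shows "(\<Sum>i\<le>M. f i * (y::'a::comm_ring_1) ^ i) = (\<Sum>i\<le>N. f i * y ^ i)"
  using assms by (intro sum.mono_neutral_right) auto

theorem finite_triple_product: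
  "(\<Prod>k\<in>{1..n}. (y + Q ^ k) * (1 + y * Q ^ (k - 1))) = (\<Sum>i\<le>2 * n. triple_coeff Q n i * y ^ i)"
proof (induction n)
  case 0
  then show ?case by (simp add: triple_coeff_def tri_def)
next
  case (Suc n)
  define S where "S = (\<Sum>i\<le>2 * n. triple_coeff Q n i * y ^ i)"
  have s1: "(\<Sum>i\<le>Suc (Suc (2 * n)). triple_coeff Q n i * y ^ i) = S"
    unfolding S_def by (rule sum_atMost_vanishing) (auto simp: triple_coeff_eq_0)
  have s2: "(\<Sum>i\<le>Suc (Suc (2 * n)). shift_seq (triple_coeff Q n) i * y ^ i) = y * S"
    unfolding sum_shift_seq S_def by (subst sum_atMost_vanishing) (auto simp: triple_coeff_eq_0)
  have s3: "(\<Sum>i\<le>Suc (Suc (2 * n)). shift_seq (shift_seq (triple_coeff Q n)) i * y ^ i) = y * y * S"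
    unfolding sum_shift_seq S_def by simp
  have "(\<Sum>i\<le>2 * Suc n. triple_coeff Q (Suc n) i * y ^ i)
      = (\<Sum>i\<le>Suc (Suc (2 * n)). Q ^ Suc n * (triple_coeff Q n i * y ^ i)
          + (1 + Q ^ (2 * n + 1)) * (shift_seq (triple_coeff Q n) i * y ^ i)
          + Q ^ n * (shift_seq (shift_seq (triple_coeff Q n)) i * y ^ i))"
    by (rule sum.cong) (simp_all add: triple_coeff_Suc algebra_simps)
  also have "\<dots> = Q ^ Suc n * S + (1 + Q ^ (2 * n + 1)) * (y * S) + Q ^ n * (y * y * S)"
    by (simp only: sum.distrib sum_distrib_left[symmetric] s1 s2 s3)
  also have "Q ^ (2 * n + 1) = Q ^ Suc n * Q ^ n"
    by (simp add: mult_2 power_add mult.assoc)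
  also have "Q ^ Suc n * S + (1 + Q ^ Suc n * Q ^ n) * (y * S) + Q ^ n * (y * y * S)
      = S * ((y + Q ^ Suc n) * (1 + y * Q ^ (Suc n - 1)))"
    by (simp add: algebra_simps)
  finally have "(\<Sum>i\<le>2 * Suc n. triple_coeff Q (Suc n) i * y ^ i)
      = S * ((y + Q ^ Suc n) * (1 + y * Q ^ (Suc n - 1)))" .
  moreover have "(\<Prod>k\<in>{1..Suc n}. (y + Q ^ k) * (1 + y * Q ^ (k - 1)))
      = (\<Prod>k\<in>{1..n}. (y + Q ^ k) * (1 + y * Q ^ (k - 1))) * ((y + Q ^ Suc n) * (1 + y * Q ^ (Suc n - 1)))"
    by (simp add: prod.nat_ivl_Suc')
  ultimately show ?case
    using Suc.IH S_def by simp
qed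

definition one_below :: "nat \<Rightarrow> 'a::comm_ring_1 fps \<Rightarrow> bool" where
  "one_below N f \<longleftrightarrow> (\<exists>u. f = 1 + fps_X ^ N * u)"

lemma one_below_1 [simp]: "one_below N 1"
  unfolding one_below_def by (rule exI[of _ 0]) simp

lemma one_below_mult_nth:
  assumes "one_below N g" "k < N" shows "(f * g) $ k = f $ k"
proof -
  obtain u where "g = 1 + fps_X ^ N * u" using assms(1) unfolding one_below_def ..
  then have "f * g = f + fps_X ^ N * (f * u)" by (simp add: algebra_simps)
  then show ?thesis using assms(2) by (simp add: fps_X_power_mult_nth)
qed

lemma one_below_nth: "one_below N g \<Longrightarrow> k < N \<Longrightarrow> g $ k = (1::'a::comm_ring_1 fps) $ k"
  using one_below_mult_nth[of N g k 1] by simp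

lemma one_below_mult: "one_below N f \<Longrightarrow> one_below N g \<Longrightarrow> one_below N (f * g)"
  unfolding one_below_def
proof (elim exE)
  fix u v assume "f = 1 + fps_X ^ N * u" "g = 1 + fps_X ^ N * v"
  then have "f * g = 1 + fps_X ^ N * (u + v + fps_X ^ N * u * v)" by (simp add: algebra_simps)
  then show "\<exists>w. f * g = 1 + fps_X ^ N * w" ..
qed

lemma one_below_prod: "(\<And>l. l \<in> A \<Longrightarrow> one_below N (f l)) \<Longrightarrow> one_below N (\<Prod>l\<in>A. f l)"
proof (induction A rule: infinite_finite_induct)
  case (insert x F)
  then show ?case by (simp add: one_below_mult)
qed simp_all

lemma one_below_one_minus_X_power:
  assumes "N \<le> k" shows "one_below N (1 - fps_X ^ k :: 'a::comm_ring_1 fps)"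
proof -
  have "(1 - fps_X ^ k :: 'a fps) = 1 + fps_X ^ N * (- (fps_X ^ (k - N)))"
    using assms by (simp flip: power_add)
  then show ?thesis unfolding one_below_def ..
qed

lemma one_below_qpoch_tail:
  assumes "N \<le> r * Suc a"
  shows "one_below N (\<Prod>l\<in>{Suc a..c}. 1 - (fps_X ^ r :: 'a::comm_ring_1 fps) ^ l)"
proof (rule one_below_prod)
  fix l assume "l \<in> {Suc a..c}"
  then have "r * Suc a \<le> r * l" by (intro mult_le_mono2) simp
  then show "one_below N (1 - (fps_X ^ r :: 'a fps) ^ l)"
    using assms by (simp add: one_below_one_minus_X_power flip: power_mult)
qed

lemma qpoch_X_power_nth_0: "r \<ge> 1 \<Longrightarrow> qpoch (fps_X ^ r :: 'a::comm_ring_1 fps) n $ 0 = 1"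
  using one_below_nth[OF one_below_qpoch_tail[of 1 r 0 n], of 0] by (simp add: qpoch_def)

lemma qpoch_X_power_nonzero: "r \<ge> 1 \<Longrightarrow> qpoch (fps_X ^ r :: 'a::comm_ring_1 fps) n \<noteq> 0"
  using qpoch_X_power_nth_0[of r n, where 'a='a] by (auto simp del: One_nat_def)

lemma qpoch_X_nth_stable:
  assumes "m \<le> a" "a \<le> c"
  shows "qpoch (fps_X :: 'a::comm_ring_1 fps) c $ m = qpoch fps_X a $ m"
proof -
  have "one_below (Suc a) (\<Prod>l\<in>{Suc a..c}. 1 - (fps_X ^ 1 :: 'a fps) ^ l)"
    by (intro one_below_qpoch_tail) simp
  then show ?thesis
    using assms by (simp add: qpoch_split one_below_mult_nth)
qed

lemma one_below_cofactor_qpoch: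
  fixes x :: "'a::idom fps" and r :: nat
  defines "Q \<equiv> fps_X ^ r :: 'a fps"
  assumes r: "r \<ge> 1" and a: "a \<le> n" and c: "a + c = 2 * n"
    and x: "x * qpoch Q a * qpoch Q c = qpoch Q (2 * n)"
  shows "one_below (r * Suc a) (x * qpoch Q n)"
proof -
  define R1 where "R1 = (\<Prod>l\<in>{Suc a..n}. 1 - Q ^ l)"
  define R2 where "R2 = (\<Prod>l\<in>{Suc c..2 * n}. 1 - Q ^ l)"
  have "c \<le> 2 * n" using c by simp
  have "(qpoch Q a * qpoch Q c) * (x * qpoch Q n) = qpoch Q (2 * n) * qpoch Q n"
    unfolding x[symmetric] by (simp only: ac_simps)
  also have "\<dots> = (qpoch Q a * qpoch Q c) * (R1 * R2)"
    unfolding R1_def R2_def qpoch_split[OF a] qpoch_split[OF \<open>c \<le> 2 * n\<close>]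
    by (simp add: ac_simps)
  finally have "x * qpoch Q n = R1 * R2"
    using qpoch_X_power_nonzero[OF r] by (auto simp: Q_def)
  moreover have "one_below (r * Suc a) R1" "one_below (r * Suc a) R2"
    using a c unfolding R1_def R2_def Q_def by (auto intro!: one_below_qpoch_tail)
  ultimately show ?thesis by (simp add: one_below_mult)
qed

lemma one_below_qbinom_qpoch:
  assumes "r \<ge> 1" "i \<le> 2 * n"
  shows "one_below (r * (min i (2 * n - i) + 1))
           (qbinom (fps_X ^ r :: 'a::idom fps) (2 * n) i * qpoch (fps_X ^ r) n)"
proof (cases "i \<le> n")
  case True
  then have "one_below (r * Suc i) (qbinom (fps_X ^ r :: 'a fps) (2 * n) i * qpoch (fps_X ^ r) n)"
    using assms qbinom_qpoch[OF \<open>i \<le> 2 * n\<close>, of "fps_X ^ r"]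
    by (intro one_below_cofactor_qpoch) simp_all
  moreover have "min i (2 * n - i) = i" using True by simp
  ultimately show ?thesis by simp
next
  case False
  then have "one_below (r * Suc (2 * n - i)) (qbinom (fps_X ^ r :: 'a fps) (2 * n) i * qpoch (fps_X ^ r) n)"
    using assms qbinom_qpoch[OF \<open>i \<le> 2 * n\<close>, of "fps_X ^ r"]
    by (intro one_below_cofactor_qpoch) (simp_all add: ac_simps)
  moreover have "min i (2 * n - i) = 2 * n - i" using False by simp
  ultimately show ?thesis by simp
qed

text \<open>Each summand is $X^{e_i}$ times a series congruent to $1$ modulo
  $X^{r(\min(i, 2n-i)+1)}$, so under the bound its coefficient at $K$ is $[e_i = K]$.\<close>
lemma nth_sum_qbinom_qpoch:
  fixes e :: "nat \<Rightarrow> nat"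
  assumes "r \<ge> 1"
    and bound: "\<And>i. i \<le> 2 * n \<Longrightarrow> e i \<le> K \<Longrightarrow> K - e i < r * (min i (2 * n - i) + 1)"
  shows "(\<Sum>i\<le>2 * n. qbinom (fps_X ^ r :: 'a::idom fps) (2 * n) i * qpoch (fps_X ^ r) n * fps_X ^ e i) $ K
     = of_nat (card {i\<in>{..2 * n}. e i = K})"
proof -
  have "(qbinom (fps_X ^ r :: 'a fps) (2 * n) i * qpoch (fps_X ^ r) n * fps_X ^ e i) $ K
      = (if e i = K then 1 else 0)" if "i \<le> 2 * n" for i
  proof (cases "e i \<le> K")
    case True
    then show ?thesis
      using one_below_nth[OF one_below_qbinom_qpoch[OF \<open>r \<ge> 1\<close> that] bound[OF that True]]
      by (auto simp: fps_X_power_mult_right_nth)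
  qed (simp add: fps_X_power_mult_right_nth)
  then show ?thesis
    by (simp add: fps_sum_nth sum.If_cases Int_def)
qed

definition pent :: "int \<Rightarrow> nat" where
  "pent j = nat (j * (3 * j - 1) div 2)"

lemma two_pent: "2 * int (pent j) = j * (3 * j - 1)"
proof -
  have "even (j * (3 * j - 1))" by (cases "even j") auto
  moreover have "0 \<le> j * (3 * j - 1)"
    by (cases "j \<ge> 1") (auto simp: mult_nonpos_nonpos)
  ultimately show ?thesis by (simp add: pent_def)
qed

lemma abs_le_pent: "\<bar>j\<bar> \<le> int (pent j)"
proof -
  have "0 \<le> j * (j - 1)" "0 \<le> (j + 1) * j"
    by (cases "j \<ge> 1"; cases "j \<ge> 0"; simp add: mult_nonpos_nonpos)+
  moreover have "2 * int (pent j) = 3 * (j * (j - 1)) + 2 * j" "2 * int (pent j) = 3 * ((j + 1) * j) - 4 * j"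
    using two_pent[of j] by (simp_all add: algebra_simps)
  ultimately show ?thesis by linarith
qed

lemma abs_le_tri: "\<bar>j\<bar> \<le> int (tri j) + 1"
proof -
  have "0 \<le> j * (j - 1)" "0 \<le> (j + 2) * (j + 1)"
    by (cases "j \<ge> 1"; cases "j \<ge> -1"; simp add: mult_nonpos_nonpos)+
  moreover have "2 * int (tri j) = j * (j - 1) + 2 * j" "2 * int (tri j) = (j + 2) * (j + 1) - 2 * j - 2"
    using two_tri[of j] by (simp_all add: algebra_simps)
  ultimately show ?thesis by linarith
qed

lemma finite_tri_eq: "finite {k::nat. tri (int k) = m}"
proof (rule finite_subset)
  show "{k::nat. tri (int k) = m} \<subseteq> {..m + 1}"
  proof
    fix k assume "k \<in> {k::nat. tri (int k) = m}"
    then show "k \<in> {..m + 1}" using abs_le_tri[of "int k"] by auto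
  qed
qed simp

lemma card_tri_eq_int: "card {j::int. tri j = m} = 2 * card {k::nat. tri (int k) = m}"
proof -
  define S where "S = {k::nat. tri (int k) = m}"
  have "{j::int. tri j = m} = int ` S \<union> (\<lambda>k. -1 - int k) ` S"
  proof (intro equalityI subsetI)
    fix j assume j: "j \<in> {j::int. tri j = m}"
    show "j \<in> int ` S \<union> (\<lambda>k. -1 - int k) ` S"
    proof (cases "j \<ge> 0")
      case True
      then show ?thesis using j unfolding S_def by (auto intro!: image_eqI[of _ _ "nat j"])
    next
      case False
      then show ?thesis using j tri_minus_one_minus[of j] unfolding S_def
        by (auto intro!: image_eqI[of _ _ "nat (-1 - j)"] simp del: of_nat_eq_iff)
    qed
  qed (auto simp: S_def tri_minus_one_minus)
  moreover have "card (int ` S \<union> (\<lambda>k. -1 - int k) ` S) = card S + card S"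
    using finite_tri_eq[of m]
    by (subst card_Un_disjoint) (auto simp: S_def card_image inj_on_def)
  ultimately show ?thesis by (simp add: S_def)
qed

lemma card_reindex_centered:
  assumes "\<And>j. P j \<Longrightarrow> \<bar>j\<bar> \<le> int n"
  shows "card {i\<in>{..2 * n}. P (int n - int i)} = card {j. P j}"
proof -
  have "(\<lambda>i. int n - int i) ` {i\<in>{..2 * n}. P (int n - int i)} = {j. P j}"
  proof (intro equalityI subsetI)
    fix j assume "j \<in> {j. P j}"
    with assms have "\<bar>j\<bar> \<le> int n" "P j" by auto
    then show "j \<in> (\<lambda>i. int n - int i) ` {i\<in>{..2 * n}. P (int n - int i)}"
      by (intro image_eqI[of _ _ "nat (int n - j)"]) auto
  qed auto
  moreover have "inj_on (\<lambda>i. int n - int i) {i\<in>{..2 * n}. P (int n - int i)}"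
    by (auto simp: inj_on_def)
  ultimately show ?thesis by (metis card_image)
qed

section \<open>Euler's pentagonal theorem and Jacobi's identity modulo 2\<close>

lemma bit_fps_one_add: "1 + (f::bit fps) = 1 - f"
  by (simp add: fps_eq_iff)

lemma qpoch_X_triple:
  "(\<Prod>k\<in>{1..n}. (1 - fps_X ^ (3 * k - 2)) * (1 - fps_X ^ (3 * k - 1))) * qpoch (fps_X ^ 3) n
     = qpoch (fps_X :: 'a::comm_ring_1 fps) (3 * n)"
proof (induction n)
  case (Suc n)
  have prod_Suc: "(\<Prod>k\<in>{1..Suc n}. F k) = (\<Prod>k\<in>{1..n}. F k) * F (Suc n)" for F :: "nat \<Rightarrow> 'a fps"
    by (simp add: prod.nat_ivl_Suc')
  have e: "3 * Suc n = Suc (Suc (Suc (3 * n)))" by simp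
  have f: "(fps_X ^ 3) ^ Suc n = (fps_X :: 'a fps) ^ Suc (Suc (Suc (3 * n)))"
    by (simp only: power_mult[symmetric] e)
  have g: "3 * Suc n - 2 = Suc (3 * n)" "3 * Suc n - 1 = Suc (Suc (3 * n))"
    by simp_all
  have "(\<Prod>k\<in>{1..Suc n}. (1 - fps_X ^ (3 * k - 2)) * (1 - fps_X ^ (3 * k - 1))) * qpoch (fps_X ^ 3) (Suc n)
      = ((\<Prod>k\<in>{1..n}. (1 - fps_X ^ (3 * k - 2)) * (1 - fps_X ^ (3 * k - 1))) * qpoch (fps_X ^ 3) n)
        * ((1 - fps_X ^ Suc (3 * n)) * (1 - fps_X ^ Suc (Suc (3 * n)))
           * (1 - (fps_X :: 'a fps) ^ Suc (Suc (Suc (3 * n)))))"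
    unfolding prod_Suc qpoch_Suc f g by (simp only: ac_simps)
  also have "\<dots> = qpoch (fps_X :: 'a fps) (3 * Suc n)"
    unfolding Suc.IH e qpoch_Suc by (simp only: ac_simps)
  finally show ?case .
qed simp

text \<open>The triple product with $Q = X^3$, $y = X^2$: over $\mathbb{F}_2$ each factor
  $(X^2 + X^{3k})(1 + X^{3k-1})$ equals $X^2 (1 - X^{3k-2})(1 - X^{3k-1})$.\<close>
lemma triple_product_pentagonal_bit:
  "fps_X ^ (2 * m) * qpoch (fps_X :: bit fps) (3 * m)
     = (\<Sum>i\<le>2 * m. qbinom (fps_X ^ 3) (2 * m) i * qpoch (fps_X ^ 3) m * fps_X ^ (2 * m + pent (int m - int i)))"
  (is "_ = ?rhs")
proof -
  let ?X = "fps_X :: bit fps"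
  have factor: "(?X ^ 2 + (?X ^ 3) ^ k) * (1 + ?X ^ 2 * (?X ^ 3) ^ (k - 1))
      = ?X ^ 2 * ((1 - ?X ^ (3 * k - 2)) * (1 - ?X ^ (3 * k - 1)))" if "k \<in> {1..m}" for k
  proof -
    from that have "2 + (3 * k - 2) = 3 * k" "2 + 3 * (k - 1) = 3 * k - 1" by auto
    then have "(?X ^ 3) ^ k = ?X ^ 2 * ?X ^ (3 * k - 2)" "?X ^ 2 * (?X ^ 3) ^ (k - 1) = ?X ^ (3 * k - 1)"
      by (simp_all only: power_mult[symmetric] power_add[symmetric])
    then have "(?X ^ 2 + (?X ^ 3) ^ k) * (1 + ?X ^ 2 * (?X ^ 3) ^ (k - 1))
        = ?X ^ 2 * ((1 + ?X ^ (3 * k - 2)) * (1 + ?X ^ (3 * k - 1)))"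
      by (simp add: algebra_simps)
    then show ?thesis by (simp only: bit_fps_one_add)
  qed
  have exponent: "3 * tri (int m - int i) + 2 * i = 2 * m + pent (int m - int i)" for i
    using two_tri[of "int m - int i"] two_pent[of "int m - int i"] by (simp add: algebra_simps)
  have "(\<Prod>k\<in>{1..m}. (?X ^ 2 + (?X ^ 3) ^ k) * (1 + ?X ^ 2 * (?X ^ 3) ^ (k - 1)))
      = (\<Prod>k\<in>{1..m}. ?X ^ 2 * ((1 - ?X ^ (3 * k - 2)) * (1 - ?X ^ (3 * k - 1))))"
    by (rule prod.cong[OF refl factor])
  also have "\<dots> = ?X ^ (2 * m) * (\<Prod>k\<in>{1..m}. (1 - ?X ^ (3 * k - 2)) * (1 - ?X ^ (3 * k - 1)))"
    by (simp only: prod.distrib) (simp add: power_mult)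
  finally have "fps_X ^ (2 * m) * qpoch ?X (3 * m)
      = (\<Prod>k\<in>{1..m}. (?X ^ 2 + (?X ^ 3) ^ k) * (1 + ?X ^ 2 * (?X ^ 3) ^ (k - 1))) * qpoch (?X ^ 3) m"
    unfolding qpoch_X_triple[symmetric] by (simp only: ac_simps)
  also have "\<dots> = (\<Sum>i\<le>2 * m. triple_coeff (?X ^ 3) m i * (?X ^ 2) ^ i * qpoch (?X ^ 3) m)"
    by (simp only: finite_triple_product sum_distrib_right)
  also have "\<dots> = ?rhs"
  proof (rule sum.cong[OF refl])
    fix i
    have "(?X ^ 3) ^ tri (int m - int i) * (?X ^ 2) ^ i = ?X ^ (2 * m + pent (int m - int i))"
      by (simp only: power_mult[symmetric] power_add[symmetric] exponent)
    then show "triple_coeff (?X ^ 3) m i * (?X ^ 2) ^ i * qpoch (?X ^ 3) m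
        = qbinom (?X ^ 3) (2 * m) i * qpoch (?X ^ 3) m * ?X ^ (2 * m + pent (int m - int i))"
      by (simp add: triple_coeff_def ac_simps)
  qed
  finally show ?thesis .
qed

theorem euler_pentagonal_bit:
  assumes "m \<le> N"
  shows "qpoch (fps_X :: bit fps) N $ m = of_nat (card {j. pent j = m})"
proof -
  define e where "e i = 2 * m + pent (int m - int i)" for i
  have bound: "2 * m + m - e i < 3 * (min i (2 * m - i) + 1)" if "i \<le> 2 * m" "e i \<le> 2 * m + m" for i
  proof -
    define j where "j = int m - int i"
    have "int (pent j) \<le> int m" "int (min i (2 * m - i)) = int m - \<bar>j\<bar>"
      using that unfolding e_def j_def by auto
    then have "int (2 * m + m - e i) < int (3 * (min i (2 * m - i) + 1))"
      using abs_le_pent[of j] unfolding e_def j_def[symmetric] by (simp add: of_nat_diff)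
    then show ?thesis by (simp only: of_nat_less_iff)
  qed
  have "qpoch (fps_X :: bit fps) N $ m = (fps_X ^ (2 * m) * qpoch fps_X (3 * m)) $ (2 * m + m)"
    using qpoch_X_nth_stable[OF order_refl, of m N, where 'a=bit]
      qpoch_X_nth_stable[OF order_refl, of m "3 * m", where 'a=bit] assms
    by (simp add: fps_X_power_mult_nth)
  also have "\<dots> = of_nat (card {i\<in>{..2 * m}. e i = 2 * m + m})"
    unfolding triple_product_pentagonal_bit e_def[symmetric]
    by (rule nth_sum_qbinom_qpoch) (use bound in auto)
  also have "{i\<in>{..2 * m}. e i = 2 * m + m} = {i\<in>{..2 * m}. pent (int m - int i) = m}"
    by (auto simp: e_def)
  also have "card \<dots> = card {j. pent j = m}"
    by (rule card_reindex_centered) (use abs_le_pent in force)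
  finally show ?thesis .
qed

text \<open>The triple product with $Q = X$, $y = 1$ has to be taken over $\mathbb{Z}$: the
  factor $1 + X^0 = 2$ vanishes over $\mathbb{F}_2$.\<close>
lemma triple_product_triangular:
  fixes m :: nat
  defines "P \<equiv> \<lambda>n. \<Prod>k\<in>{1..n}. 1 + (fps_X :: int fps) ^ k"
  shows "2 * (qpoch fps_X (Suc m) * P (Suc m) * P m)
     = (\<Sum>i\<le>2 * Suc m. qbinom (fps_X ^ 1) (2 * Suc m) i * qpoch (fps_X ^ 1) (Suc m)
          * fps_X ^ tri (int (Suc m) - int i))" (is "_ = ?rhs")
proof -
  have "(\<Sum>i\<le>2 * Suc m. triple_coeff fps_X (Suc m) i * 1 ^ i)
      = (\<Prod>k\<in>{1..Suc m}. (1 + fps_X ^ k) * (1 + 1 * (fps_X :: int fps) ^ (k - 1)))"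
    by (rule finite_triple_product[symmetric])
  also have "\<dots> = P (Suc m) * (\<Prod>k\<in>{1..Suc m}. 1 + (fps_X :: int fps) ^ (k - 1))"
    by (simp add: P_def prod.distrib)
  also have "(\<Prod>k\<in>{1..Suc m}. 1 + (fps_X :: int fps) ^ (k - 1)) = (\<Prod>k\<in>{0..m}. 1 + fps_X ^ k)"
    using prod.shift_bounds_cl_Suc_ivl[of "\<lambda>k. 1 + (fps_X :: int fps) ^ (k - 1)" 0 m] by simp
  also have "\<dots> = 2 * P m"
    by (simp add: P_def prod.atLeast_Suc_atMost)
  finally have tp: "(\<Sum>i\<le>2 * Suc m. triple_coeff fps_X (Suc m) i * 1 ^ i) = P (Suc m) * (2 * P m)" .
  have "?rhs = (\<Sum>i\<le>2 * Suc m. triple_coeff fps_X (Suc m) i * 1 ^ i) * qpoch fps_X (Suc m)"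
    unfolding sum_distrib_right by (rule sum.cong) (simp_all add: triple_coeff_def)
  then show ?thesis
    unfolding tp by (simp add: ac_simps)
qed

theorem jacobi_identity_int:
  "(qpoch (fps_X :: int fps) (Suc m) * (\<Prod>k\<in>{1..Suc m}. 1 + fps_X ^ k) * (\<Prod>k\<in>{1..m}. 1 + fps_X ^ k)) $ m
     = int (card {k::nat. tri (int k) = m})"
proof -
  define n where "n = Suc m"
  have bound: "m - tri (int n - int i) < 1 * (min i (2 * n - i) + 1)"
    if "i \<le> 2 * n" "tri (int n - int i) \<le> m" for i
  proof -
    define j where "j = int n - int i"
    have "int (tri j) \<le> int m" "int (min i (2 * n - i)) = int n - \<bar>j\<bar>"
      using that unfolding j_def by auto
    then have "int (m - tri j) < int (min i (2 * n - i) + 1)"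
      using abs_le_tri[of j] by (simp add: of_nat_diff n_def)
    then show ?thesis unfolding j_def by (simp only: of_nat_less_iff mult_1)
  qed
  let ?F = "qpoch (fps_X :: int fps) n * (\<Prod>k\<in>{1..n}. 1 + fps_X ^ k) * (\<Prod>k\<in>{1..m}. 1 + fps_X ^ k)"
  have "2 * ?F $ m = (2 * ?F) $ m"
    by (simp only: mult_2 fps_add_nth)
  also have "\<dots> = int (card {i\<in>{..2 * n}. tri (int n - int i) = m})"
    unfolding n_def triple_product_triangular
    by (rule nth_sum_qbinom_qpoch) (use bound in \<open>auto simp: n_def\<close>)
  also have "card {i\<in>{..2 * n}. tri (int n - int i) = m} = card {j. tri j = m}"
  proof (rule card_reindex_centered)
    fix j assume "tri j = m"
    then show "\<bar>j\<bar> \<le> int n" using abs_le_tri[of j] by (simp add: n_def)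
  qed
  finally show ?thesis
    by (simp add: card_tri_eq_int n_def)
qed

definition fps_of_int :: "int fps \<Rightarrow> 'a::comm_ring_1 fps" where
  "fps_of_int f = Abs_fps (\<lambda>k. of_int (f $ k))"

lemma fps_of_int_nth [simp]: "fps_of_int f $ k = of_int (f $ k)"
  by (simp add: fps_of_int_def)

lemma fps_of_int_1 [simp]: "fps_of_int 1 = 1"
  by (simp add: fps_eq_iff)

lemma fps_of_int_mult: "fps_of_int (f * g) = fps_of_int f * fps_of_int g"
  by (simp add: fps_eq_iff fps_mult_nth)

lemma fps_of_int_prod: "fps_of_int (\<Prod>l\<in>S. f l) = (\<Prod>l\<in>S. fps_of_int (f l))"
  by (induction S rule: infinite_finite_induct) (simp_all add: fps_of_int_mult)

lemma fps_of_int_one_add_X_power [simp]: "fps_of_int (1 + fps_X ^ k) = 1 + fps_X ^ k"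
  by (simp add: fps_eq_iff)

lemma fps_of_int_one_minus_X_power [simp]: "fps_of_int (1 - fps_X ^ k) = 1 - fps_X ^ k"
  by (simp add: fps_eq_iff)

theorem jacobi_identity_bit:
  "(qpoch (fps_X :: bit fps) (Suc m) * qpoch fps_X (Suc m) * qpoch fps_X m) $ m
     = of_nat (card {k::nat. tri (int k) = m})"
proof -
  have "fps_of_int (\<Prod>k\<in>{1..n}. 1 + fps_X ^ k) = qpoch (fps_X :: bit fps) n"
    "fps_of_int (qpoch fps_X n) = qpoch (fps_X :: bit fps) n" for n
    by (simp_all add: fps_of_int_prod qpoch_def bit_fps_one_add)
  then have "(qpoch (fps_X :: bit fps) (Suc m) * qpoch fps_X (Suc m) * qpoch fps_X m) $ m
      = of_int ((qpoch (fps_X :: int fps) (Suc m) * (\<Prod>k\<in>{1..Suc m}. 1 + fps_X ^ k)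
          * (\<Prod>k\<in>{1..m}. 1 + fps_X ^ k)) $ m)"
    by (simp only: fps_of_int_nth[symmetric] fps_of_int_mult)
  then show ?thesis
    by (simp only: jacobi_identity_int of_int_of_nat_eq)
qed

section \<open>Generating functions of restricted partitions\<close>

definition count_partitions :: "nat set \<Rightarrow> nat \<Rightarrow> nat" where
  "count_partitions S n = card {M :: nat multiset. set_mset M \<subseteq> S \<and> sum_mset M = n}"

definition partitions_fps :: "nat set \<Rightarrow> 'a::comm_ring_1 fps" where
  "partitions_fps S = Abs_fps (\<lambda>n. of_nat (count_partitions S n))"

lemma member_le_sum_mset: "x \<in># M \<Longrightarrow> x \<le> sum_mset (M :: nat multiset)"
  by (auto dest: multi_member_split)

lemma size_le_sum_mset: "(\<forall>x\<in>#M. 0 < x) \<Longrightarrow> size M \<le> sum_mset (M :: nat multiset)"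
  by (induction M) auto

lemma finite_partitions:
  assumes "0 \<notin> S" shows "finite {M :: nat multiset. set_mset M \<subseteq> S \<and> sum_mset M = n}"
proof (rule finite_subset)
  show "{M :: nat multiset. set_mset M \<subseteq> S \<and> sum_mset M = n} \<subseteq> (\<Union>s\<le>n. multisets_of_size {..n} s)"
  proof
    fix M assume M: "M \<in> {M. set_mset M \<subseteq> S \<and> sum_mset M = n}"
    then have "\<forall>x\<in>#M. 0 < x" using assms by (auto intro!: gr0I)
    then have "size M \<le> n" using size_le_sum_mset M by fastforce
    moreover have "set_mset M \<subseteq> {..n}" using M member_le_sum_mset by fastforce
    ultimately show "M \<in> (\<Union>s\<le>n. multisets_of_size {..n} s)"
      unfolding multisets_of_size_def by auto
  qed
qed auto

text \<open>Split the partitions of $n$ by whether they use the part $a$; removing one copy of $a$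
  is a bijection onto the partitions of $n - a$.\<close>
lemma count_partitions_insert:
  assumes "a \<notin> S" "0 < a" "0 \<notin> S"
  shows "count_partitions (insert a S) n
           = count_partitions S n + (if a \<le> n then count_partitions (insert a S) (n - a) else 0)"
proof -
  define T where "T = {M :: nat multiset. set_mset M \<subseteq> insert a S \<and> sum_mset M = n}"
  have "finite T" unfolding T_def using assms by (intro finite_partitions) auto
  have avoiding: "{M\<in>T. a \<notin># M} = {M. set_mset M \<subseteq> S \<and> sum_mset M = n}"
    unfolding T_def using assms(1) by auto
  have containing: "{M\<in>T. a \<in># M}
      = (if a \<le> n then add_mset a ` {M. set_mset M \<subseteq> insert a S \<and> sum_mset M = n - a} else {})"
  proof (cases "a \<le> n")
    case True
    have "{M\<in>T. a \<in># M} = add_mset a ` {M. set_mset M \<subseteq> insert a S \<and> sum_mset M = n - a}"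
    proof (intro equalityI subsetI)
      fix M assume "M \<in> {M\<in>T. a \<in># M}"
      then obtain M' where "M = add_mset a M'" "M \<in> T" by (auto dest: multi_member_split)
      then show "M \<in> add_mset a ` {M. set_mset M \<subseteq> insert a S \<and> sum_mset M = n - a}"
        unfolding T_def by auto
    qed (use True in \<open>auto simp: T_def\<close>)
    then show ?thesis using True by simp
  qed (use member_le_sum_mset in \<open>fastforce simp: T_def\<close>)
  have "card T = card {M\<in>T. a \<notin># M} + card {M\<in>T. a \<in># M}"
    using \<open>finite T\<close> by (subst card_Un_disjoint[symmetric]) (auto intro: arg_cong[where f = card])
  moreover have "inj_on (add_mset a) A" for A
    by (simp add: inj_on_def)
  ultimately show ?thesis
    unfolding count_partitions_def T_def[symmetric] avoiding containing by (simp add: card_image)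
qed

lemma partitions_fps_insert:
  assumes "a \<notin> S" "0 < a" "0 \<notin> S"
  shows "partitions_fps (insert a S) * (1 - fps_X ^ a) = (partitions_fps S :: 'a::comm_ring_1 fps)"
proof (rule fps_ext)
  fix n
  have "partitions_fps (insert a S) * (1 - fps_X ^ a)
      = partitions_fps (insert a S) - fps_X ^ a * (partitions_fps (insert a S) :: 'a fps)"
    by (simp add: algebra_simps)
  then show "(partitions_fps (insert a S) * (1 - fps_X ^ a) :: 'a fps) $ n = partitions_fps S $ n"
    using count_partitions_insert[OF assms, of n]
    by (simp add: partitions_fps_def fps_X_power_mult_nth not_less)
qed

lemma partitions_fps_mult_prod:
  assumes "finite S" "0 \<notin> S"
  shows "partitions_fps S * (\<Prod>a\<in>S. 1 - fps_X ^ a) = (1 :: 'a::comm_ring_1 fps)"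
  using assms
proof (induction S rule: finite_induct)
  case empty
  have "count_partitions {} n = (if n = 0 then 1 else 0)" for n
  proof -
    have "{M :: nat multiset. set_mset M \<subseteq> {} \<and> sum_mset M = n} = (if n = 0 then {{#}} else {})"
      by auto
    then show ?thesis unfolding count_partitions_def by simp
  qed
  then show ?case
    by (simp add: fps_eq_iff partitions_fps_def)
next
  case (insert a S)
  then have "partitions_fps (insert a S) * (\<Prod>a\<in>insert a S. 1 - fps_X ^ a)
      = (partitions_fps (insert a S) * (1 - fps_X ^ a)) * (\<Prod>a\<in>S. 1 - (fps_X ^ a :: 'a fps))"
    by (simp add: ac_simps)
  also have "\<dots> = 1"
    using insert by (simp add: partitions_fps_insert)
  finally show ?case .
qed

definition fps_agree :: "nat \<Rightarrow> 'a::comm_semiring_1 fps \<Rightarrow> 'a fps \<Rightarrow> bool" where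
  "fps_agree m f g \<longleftrightarrow> (\<forall>k\<le>m. f $ k = g $ k)"

lemma fps_agree_refl [simp]: "fps_agree m f f"
  by (simp add: fps_agree_def)

lemma fps_agree_mult: "fps_agree m f g \<Longrightarrow> fps_agree m f' g' \<Longrightarrow> fps_agree m (f * f') (g * g')"
  unfolding fps_agree_def fps_mult_nth by (auto intro!: sum.cong)

definition b_fps :: "nat \<Rightarrow> 'a::comm_ring_1 fps" where
  "b_fps l = Abs_fps (\<lambda>n. of_nat (b l n))"

lemma b_eq_count_partitions:
  assumes "n \<le> N" shows "b l n = count_partitions {k\<in>{1..N}. \<not> l dvd k} n"
proof -
  have "{M :: nat multiset. (\<forall>x\<in>#M. 0 < x \<and> \<not> l dvd x) \<and> sum_mset M = n}
      = {M. set_mset M \<subseteq> {k\<in>{1..N}. \<not> l dvd k} \<and> sum_mset M = n}"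
    using assms member_le_sum_mset by fastforce
  then show ?thesis unfolding b_def count_partitions_def by simp
qed

lemma qpoch_X_split_multiples:
  assumes "0 < l"
  shows "qpoch (fps_X :: 'a::comm_ring_1 fps) N
     = (\<Prod>a\<in>{k\<in>{1..N}. \<not> l dvd k}. 1 - fps_X ^ a) * qpoch (fps_X ^ l) (N div l)"
proof -
  define S where "S = {k\<in>{1..N}. \<not> l dvd k}"
  have split: "{1..N} = S \<union> (\<lambda>i. l * i) ` {1..N div l}"
  proof (intro equalityI subsetI)
    fix k assume k: "k \<in> {1..N}"
    show "k \<in> S \<union> (\<lambda>i. l * i) ` {1..N div l}"
    proof (cases "l dvd k")
      case True
      then obtain i where "k = l * i" by blast
      with k assms have "i \<in> {1..N div l}" by (auto simp: less_eq_div_iff_mult_less_eq mult.commute)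
      then show ?thesis using \<open>k = l * i\<close> by blast
    qed (use k in \<open>auto simp: S_def\<close>)
  qed (use assms in \<open>auto simp: S_def less_eq_div_iff_mult_less_eq mult.commute\<close>)
  have "qpoch (fps_X :: 'a fps) N = (\<Prod>a\<in>S. 1 - fps_X ^ a) * (\<Prod>a\<in>(\<lambda>i. l * i) ` {1..N div l}. 1 - fps_X ^ a)"
    unfolding qpoch_def split by (rule prod.union_disjoint) (auto simp: S_def)
  also have "(\<Prod>a\<in>(\<lambda>i. l * i) ` {1..N div l}. 1 - (fps_X :: 'a fps) ^ a) = qpoch (fps_X ^ l) (N div l)"
    using assms by (simp add: qpoch_def prod.reindex inj_on_def power_mult)
  finally show ?thesis unfolding S_def .
qed

lemma b_fps_mult_qpoch_nth:
  assumes "0 < l" "m \<le> N"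
  shows "(b_fps l * qpoch (fps_X :: 'a::comm_ring_1 fps) N) $ m = qpoch (fps_X ^ l) (N div l) $ m"
proof -
  let ?S = "{k\<in>{1..N}. \<not> l dvd k}"
  have "fps_agree m (b_fps l) (partitions_fps ?S :: 'a fps)"
    using assms by (auto simp: fps_agree_def b_fps_def partitions_fps_def b_eq_count_partitions[where N = N])
  from fps_agree_mult[OF this fps_agree_refl, of "qpoch fps_X N"]
  have "(b_fps l * qpoch (fps_X :: 'a fps) N) $ m = (partitions_fps ?S * qpoch fps_X N) $ m"
    by (simp add: fps_agree_def)
  moreover have "partitions_fps ?S * qpoch (fps_X :: 'a fps) N = qpoch (fps_X ^ l) (N div l)"
    unfolding qpoch_X_split_multiples[OF \<open>0 < l\<close>] mult.assoc[symmetric]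
    by (subst partitions_fps_mult_prod) auto
  ultimately show ?thesis by simp
qed

section \<open>Dilations and arithmetic sections of power series\<close>

definition fps_dilate :: "nat \<Rightarrow> 'a::idom fps \<Rightarrow> 'a fps" where
  "fps_dilate k f = f oo fps_X ^ k"

lemma fps_dilate_nth:
  assumes "0 < k"
  shows "fps_dilate k f $ n = (if k dvd n then f $ (n div k) else 0)"
proof -
  have coeff: "f $ i * (fps_X ^ k) ^ i $ n = (if i = n div k \<and> k dvd n then f $ i else 0)" for i :: nat
    using assms by (auto simp flip: power_mult)
  have "fps_dilate k f $ n = (\<Sum>i\<in>{0..n}. if i = n div k \<and> k dvd n then f $ i else 0)"
    unfolding fps_dilate_def fps_compose_nth coeff ..
  also have "\<dots> = (if k dvd n then f $ (n div k) else 0)"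
    by (cases "k dvd n") (simp_all add: sum.delta)
  finally show ?thesis .
qed

lemma fps_dilate_mult: "0 < k \<Longrightarrow> fps_dilate k (f * g) = fps_dilate k f * fps_dilate k g"
  unfolding fps_dilate_def by (rule fps_compose_mult_distrib) simp

lemma fps_compose_X_power_X_power: "0 < k \<Longrightarrow> (fps_X :: 'a::idom fps) ^ n oo fps_X ^ k = fps_X ^ (k * n)"
  by (simp add: fps_compose_power[symmetric] power_mult)

lemma fps_dilate_dilate: "0 < a \<Longrightarrow> 0 < c \<Longrightarrow> fps_dilate a (fps_dilate c f) = fps_dilate (a * c) f"
  unfolding fps_dilate_def
  by (simp add: fps_compose_assoc[symmetric] fps_compose_X_power_X_power mult.commute)

lemma qpoch_X_power_eq_dilate:
  "0 < k \<Longrightarrow> qpoch (fps_X ^ k :: 'a::idom fps) n = fps_dilate k (qpoch fps_X n)"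
proof (induction n)
  case (Suc n)
  have "fps_dilate k (1 - fps_X ^ Suc n :: 'a fps) = 1 - (fps_X ^ k) ^ Suc n"
    by (simp only: fps_dilate_def fps_compose_sub_distrib fps_compose_1
        fps_compose_X_power_X_power[OF Suc.prems] power_mult)
  then show ?case
    using Suc by (simp only: qpoch_Suc fps_dilate_mult)
qed (simp add: fps_dilate_def)

text \<open>Over $\mathbb{F}_2$ the terms $f_i f_{n-i}$ and $f_{n-i} f_i$ of $(f^2)_n$ cancel, leaving
  only the middle term $f_{n/2}^2 = f_{n/2}$.\<close>
lemma fps_square_bit: "(f::bit fps) * f = fps_dilate 2 f"
proof (rule fps_ext)
  fix n
  define h where "h i = f $ i * f $ (n - i)" for i
  define L where "L = {i\<in>{0..n}. 2 * i < n}"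
  define U where "U = {i\<in>{0..n}. n < 2 * i}"
  define M where "M = {i\<in>{0..n}. 2 * i = n}"
  have split: "{0..n} = L \<union> U \<union> M"
    unfolding L_def U_def M_def by auto
  have "finite L" "finite U" "finite M" "L \<inter> U = {}" "L \<inter> M = {}" "U \<inter> M = {}"
    by (auto simp: L_def U_def M_def)
  then have "(f * f) $ n = sum h L + sum h U + sum h M"
    unfolding fps_mult_nth split h_def[symmetric]
    by (simp only: sum.union_disjoint finite_Un Int_Un_distrib2 Un_empty)
  also have "sum h U = sum h L"
    by (rule sum.reindex_bij_witness[of _ "\<lambda>i. n - i" "\<lambda>i. n - i"])
      (auto simp: L_def U_def h_def mult.commute)
  also have "sum h M = (if even n then f $ (n div 2) else 0)"
  proof (cases "even n")
    case True
    then have "M = {n div 2}" "n - n div 2 = n div 2" by (auto simp: M_def)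
    then show ?thesis using True by (simp add: h_def)
  next
    case False
    then have "M = {}" by (auto simp: M_def)
    then show ?thesis using False by simp
  qed
  finally show "(f * f) $ n = fps_dilate 2 f $ n"
    by (simp add: fps_dilate_nth)
qed

definition fps_section :: "nat \<Rightarrow> nat \<Rightarrow> 'a::comm_ring_1 fps \<Rightarrow> 'a fps" where
  "fps_section k r f = Abs_fps (\<lambda>n. f $ (k * n + r))"

lemma fps_section_mult_dilate:
  assumes "r < k"
  shows "fps_section k r (f * fps_dilate k g) = fps_section k r f * (g :: 'a::idom fps)"
proof (rule fps_ext)
  fix n
  have "0 < k" using assms by simp
  have multiples: "{i\<in>{0..k * n + r}. k dvd i} = (\<lambda>t. k * t) ` {0..n}"
  proof (intro equalityI subsetI)
    fix i assume "i \<in> {i\<in>{0..k * n + r}. k dvd i}"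
    then obtain t where "i = k * t" "k * t \<le> k * n + r" by auto
    moreover have "t \<le> n"
    proof (rule ccontr)
      assume "\<not> t \<le> n"
      then have "k * Suc n \<le> k * t" by (intro mult_le_mono2) simp
      with \<open>k * t \<le> k * n + r\<close> assms show False by simp
    qed
    ultimately show "i \<in> (\<lambda>t. k * t) ` {0..n}" by auto
  qed (auto intro: trans_le_add1)
  have "fps_section k r (f * fps_dilate k g) $ n = (fps_dilate k g * f) $ (k * n + r)"
    by (simp add: fps_section_def mult.commute)
  also have "\<dots> = (\<Sum>i\<in>{0..k * n + r}. fps_dilate k g $ i * f $ (k * n + r - i))"
    by (rule fps_mult_nth)
  also have "\<dots> = (\<Sum>i\<in>{0..k * n + r}. if k dvd i then g $ (i div k) * f $ (k * n + r - i) else 0)"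
    by (rule sum.cong) (simp_all add: fps_dilate_nth[OF \<open>0 < k\<close>])
  also have "\<dots> = (\<Sum>i\<in>{i\<in>{0..k * n + r}. k dvd i}. g $ (i div k) * f $ (k * n + r - i))"
    by (rule sum.inter_filter[symmetric]) simp
  also have "\<dots> = (\<Sum>t\<in>{0..n}. g $ t * f $ (k * (n - t) + r))"
    unfolding multiples using \<open>0 < k\<close>
    by (subst sum.reindex) (auto simp: inj_on_def diff_mult_distrib2 intro!: sum.cong)
  also have "\<dots> = (fps_section k r f * g) $ n"
    by (simp add: fps_mult_nth fps_section_def mult.commute)
  finally show "fps_section k r (f * fps_dilate k g) $ n = (fps_section k r f * g) $ n" .
qed

definition fibre_fps :: "('i \<Rightarrow> nat) \<Rightarrow> 'a::comm_semiring_1 fps" where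
  "fibre_fps \<phi> = Abs_fps (\<lambda>m. of_nat (card {i. \<phi> i = m}))"

lemma fps_dilate_fibre_fps:
  assumes "0 < a" shows "fps_dilate a (fibre_fps \<phi>) = fibre_fps (\<lambda>i. a * \<phi> i)"
proof (rule fps_ext)
  fix n
  show "fps_dilate a (fibre_fps \<phi>) $ n = fibre_fps (\<lambda>i. a * \<phi> i) $ n"
  proof (cases "a dvd n")
    case True
    then obtain t where "n = a * t" by blast
    moreover have "{i. a * \<phi> i = a * t} = {i. \<phi> i = t}" using assms by auto
    ultimately show ?thesis using assms by (simp add: fps_dilate_nth fibre_fps_def)
  next
    case False
    then have "{i. a * \<phi> i = n} = {}" by auto
    then show ?thesis using False assms by (simp add: fps_dilate_nth fibre_fps_def)
  qed
qed

lemma fibre_fps_mult: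
  fixes \<phi> :: "'i \<Rightarrow> nat" and \<psi> :: "'j \<Rightarrow> nat"
  assumes "\<And>u. finite {i. \<phi> i = u}" "\<And>u. finite {j. \<psi> j = u}"
  shows "fibre_fps \<phi> * fibre_fps \<psi> = (fibre_fps (\<lambda>(i, j). \<phi> i + \<psi> j) :: 'a::comm_semiring_1 fps)"
proof (rule fps_ext)
  fix m
  have "{(i, j). \<phi> i + \<psi> j = m} = (\<Union>u\<in>{0..m}. {i. \<phi> i = u} \<times> {j. \<psi> j = m - u})"
    by auto
  then have "card {(i, j). \<phi> i + \<psi> j = m} = (\<Sum>u\<in>{0..m}. card {i. \<phi> i = u} * card {j. \<psi> j = m - u})"
    using assms by (simp add: card_UN_disjoint card_cartesian_product disjoint_iff)
  then show "(fibre_fps \<phi> * fibre_fps \<psi> :: 'a fps) $ m = fibre_fps (\<lambda>(i, j). \<phi> i + \<psi> j) $ m"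
    by (simp add: fps_mult_nth fibre_fps_def case_prod_beta')
qed

lemma finite_pent_eq: "0 < c \<Longrightarrow> finite {j. c * pent j = u}"
proof (rule finite_subset)
  assume "0 < c"
  show "{j. c * pent j = u} \<subseteq> {-int u..int u}"
  proof
    fix j assume "j \<in> {j. c * pent j = u}"
    then have "pent j \<le> u" using \<open>0 < c\<close> by (auto intro: order.trans[OF _ mult_le_mono1[of 1 c]])
    then show "j \<in> {-int u..int u}" using abs_le_pent[of j] by auto
  qed
qed simp

text \<open>The power series $f(-q) = \prod_{k \ge 1} (1 - q^k)$, read off from its truncations.\<close>
definition euler_fps :: "'a::comm_ring_1 fps" where
  "euler_fps = Abs_fps (\<lambda>m. qpoch fps_X m $ m)"

lemma qpoch_X_nth_eq_euler_fps: "m \<le> N \<Longrightarrow> qpoch fps_X N $ m = (euler_fps :: 'a::comm_ring_1 fps) $ m"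
  using qpoch_X_nth_stable[of m m N] by (simp add: euler_fps_def)

lemma fps_agree_euler_fps_qpoch: "m \<le> N \<Longrightarrow> fps_agree m euler_fps (qpoch fps_X N)"
  by (simp add: fps_agree_def qpoch_X_nth_eq_euler_fps)

lemma euler_fps_nonzero: "euler_fps \<noteq> (0 :: 'a::comm_ring_1 fps)"
proof
  assume "euler_fps = (0 :: 'a fps)"
  then have "(euler_fps :: 'a fps) $ 0 = 0" by simp
  then show False by (simp add: euler_fps_def qpoch_def)
qed

lemma euler_fps_bit: "(euler_fps :: bit fps) = fibre_fps pent"
  by (rule fps_ext) (simp add: euler_fps_def fibre_fps_def euler_pentagonal_bit)

lemma euler_fps_cube_bit: "(euler_fps :: bit fps) * euler_fps * euler_fps = fibre_fps (\<lambda>k::nat. tri (int k))"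
proof (rule fps_ext)
  fix m
  have "fps_agree m (euler_fps * euler_fps * euler_fps)
      (qpoch fps_X (Suc m) * qpoch fps_X (Suc m) * (qpoch fps_X m :: bit fps))"
    by (intro fps_agree_mult fps_agree_euler_fps_qpoch) simp_all
  then show "((euler_fps :: bit fps) * euler_fps * euler_fps) $ m = fibre_fps (\<lambda>k::nat. tri (int k)) $ m"
    by (simp add: fps_agree_def fibre_fps_def jacobi_identity_bit)
qed

lemma b_fps_mult_euler_fps:
  assumes "0 < l" shows "b_fps l * euler_fps = fps_dilate l (euler_fps :: 'a::idom fps)"
proof (rule fps_ext)
  fix m
  have "fps_agree m (b_fps l * euler_fps) (b_fps l * qpoch (fps_X :: 'a fps) (l * m))"
    using assms by (intro fps_agree_mult fps_agree_euler_fps_qpoch) simp_all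
  then have "(b_fps l * euler_fps) $ m = qpoch (fps_X ^ l :: 'a fps) m $ m"
    using assms by (simp add: fps_agree_def b_fps_mult_qpoch_nth)
  also have "\<dots> = fps_dilate l euler_fps $ m"
    using assms by (simp add: qpoch_X_power_eq_dilate fps_dilate_nth qpoch_X_nth_eq_euler_fps)
  finally show "(b_fps l * euler_fps) $ m = fps_dilate l (euler_fps :: 'a fps) $ m" .
qed

section \<open>Two identities between numbers of representations\<close>

lemma pent_congruent_one_mod_5:
  assumes "5 dvd 2 * int (pent j) - 2"
  obtains u where "j = 1 - 5 * u"
proof -
  have p5: "prime (5::int)" by simp
  have "2 * int (pent j) - 2 = (3 * j + 2) * (j - 1)"
    using two_pent[of j] by (simp add: algebra_simps)
  with assms have "5 dvd 3 * j + 2 \<or> 5 dvd j - 1"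
    by (simp add: prime_dvd_mult_iff[OF p5])
  moreover have "5 dvd j - 1" if "5 dvd 3 * j + 2"
  proof -
    have "5 dvd (3 * j + 2) - 5" using that by (rule dvd_diff) simp
    then have "5 dvd 3 * (j - 1)" by (simp add: algebra_simps)
    then have "5 dvd (3::int) \<or> 5 dvd j - 1" by (simp only: prime_dvd_mult_iff[OF p5])
    then show ?thesis by simp
  qed
  ultimately obtain w where "j - 1 = 5 * w" by (auto elim: dvdE)
  then show ?thesis using that[of "- w"] by simp
qed

lemma pent_one_minus_five_times: "pent (1 - 5 * u) = 25 * pent u + 1"
  using two_pent[of "1 - 5 * u"] two_pent[of u] by (simp add: algebra_simps)

text \<open>The substitution $(i, j) \mapsto (1 - 5i, 1 - 5j)$ maps the solutions of
  $2P(i) + 5P(j) = m$ onto those of $2P(i) + 5P(j) = 25m + 7$.\<close>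
lemma card_two_pent_five_pent:
  "card {(i, j). 2 * pent i + 5 * pent j = 25 * m + 7} = card {(i, j). 2 * pent i + 5 * pent j = m}"
proof -
  define f :: "int \<times> int \<Rightarrow> int \<times> int" where "f = (\<lambda>(i, j). (1 - 5 * i, 1 - 5 * j))"
  have "inj f"
    by (auto simp: f_def inj_def)
  have "{(i, j). 2 * pent i + 5 * pent j = 25 * m + 7} \<subseteq> f ` {(i, j). 2 * pent i + 5 * pent j = m}"
  proof clarify
    fix i j assume e: "2 * pent i + 5 * pent j = 25 * m + 7"
    then have e': "2 * int (pent i) + 5 * int (pent j) = 25 * int m + 7"
      by (metis of_nat_add of_nat_mult of_nat_numeral)
    have "2 * int (pent i) - 2 = 5 * (5 * int m + 1 - int (pent j))"
      using e' by simp
    then have "5 dvd 2 * int (pent i) - 2" by simp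
    then obtain u where u: "i = 1 - 5 * u" by (rule pent_congruent_one_mod_5)
    have "2 * int (pent j) - 2 = 5 * (2 * int m - 4 * int (pent u))"
      using e' by (simp add: u pent_one_minus_five_times)
    then have "5 dvd 2 * int (pent j) - 2" by simp
    then obtain v where v: "j = 1 - 5 * v" by (rule pent_congruent_one_mod_5)
    with e u have "2 * pent u + 5 * pent v = m"
      by (simp add: pent_one_minus_five_times)
    then show "(i, j) \<in> f ` {(i, j). 2 * pent i + 5 * pent j = m}"
      unfolding f_def u v by (intro image_eqI[of _ _ "(u, v)"]) auto
  qed
  moreover have "f ` {(i, j). 2 * pent i + 5 * pent j = m} \<subseteq> {(i, j). 2 * pent i + 5 * pent j = 25 * m + 7}"
    by (auto simp: f_def pent_one_minus_five_times)
  ultimately show ?thesis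
    using \<open>inj f\<close> by (simp add: card_image inj_on_subset subset_antisym)
qed

text \<open>In the coordinates $X = 6j - 1$, $Y = 2k + 1$ one has
  $24 \cdot (5P(j) + T(k)) = 5X^2 + 3Y^2 - 8$. The map lift_rep below is
  $(X, Y) \mapsto (-(X + 3Y)/2, (Y - 5X)/2)$ if $j + k$ is even and
  $((3Y - X)/2, (5X + Y)/2)$ otherwise; both multiply $5X^2 + 3Y^2$ by $4$, sending solutions
  of $5P(j) + T(k) = m$ to solutions of $5P(j) + T(k) = 4m + 1$.\<close>

definition pent_tri_form :: "int \<Rightarrow> int \<Rightarrow> int" where
  "pent_tri_form j k = 5 * (j * (3 * j - 1)) + k * (k + 1)"

definition pent_tri_reps :: "nat \<Rightarrow> (int \<times> int) set" where
  "pent_tri_reps N = {(j, k). 5 * pent j + tri k = N}"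

definition pent_tri_reps_nat :: "nat \<Rightarrow> (int \<times> nat) set" where
  "pent_tri_reps_nat N = {(j, k). 5 * pent j + tri (int k) = N}"

definition lift_rep :: "int \<times> int \<Rightarrow> int \<times> int" where
  "lift_rep = (\<lambda>(j, k). if even (k + j) then (- ((k + j) div 2), (k - 15 * j + 2) div 2)
                        else ((k - j + 1) div 2, (k + 15 * j - 3) div 2))"

definition lower_rep :: "int \<times> int \<Rightarrow> int \<times> int" where
  "lower_rep = (\<lambda>(J, K). if 8 dvd 1 - J - K then ((1 - J - K) div 8, - 2 * J - (1 - J - K) div 8)
                         else ((K - J + 2) div 8, 2 * J - 1 + (K - J + 2) div 8))"

lemma mem_pent_tri_reps_iff: "(j, k) \<in> pent_tri_reps N \<longleftrightarrow> pent_tri_form j k = 2 * int N"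
proof -
  have "2 * int (5 * pent j + tri k) = pent_tri_form j k"
    unfolding pent_tri_form_def using two_pent[of j] two_tri[of k] by simp
  then show ?thesis unfolding pent_tri_reps_def by auto
qed

lemma lift_rep_even: "k + j = 2 * s \<Longrightarrow> lift_rep (j, k) = (- s, s - 8 * j + 1)"
proof -
  assume s: "k + j = 2 * s"
  then have "even (k + j)" "(k + j) div 2 = s" by simp_all
  moreover have "k - 15 * j + 2 = 2 * (s - 8 * j + 1)" using s by simp
  then have "(k - 15 * j + 2) div 2 = s - 8 * j + 1" by simp
  ultimately show ?thesis unfolding lift_rep_def by (simp only: case_prod_conv if_True)
qed

lemma lift_rep_odd: "k - j + 1 = 2 * s \<Longrightarrow> lift_rep (j, k) = (s, s + 8 * j - 2)"
proof -
  assume s: "k - j + 1 = 2 * s"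
  have "odd (k + j)"
  proof
    assume "even (k + j)"
    moreover have "k + j = 2 * s + 2 * j - 1" using s by simp
    ultimately show False by simp
  qed
  moreover have "(k - j + 1) div 2 = s" using s by simp
  moreover have "k + 15 * j - 3 = 2 * (s + 8 * j - 2)" using s by simp
  then have "(k + 15 * j - 3) div 2 = s + 8 * j - 2" by simp
  ultimately show ?thesis unfolding lift_rep_def by (simp only: case_prod_conv if_False)
qed

lemma pent_tri_form_lift_rep:
  "pent_tri_form (fst (lift_rep (j, k))) (snd (lift_rep (j, k))) = 4 * pent_tri_form j k + 2"
proof (cases "even (k + j)")
  case True
  then obtain s where s: "k + j = 2 * s" by blast
  have "pent_tri_form (- s) (s - 8 * j + 1) = 4 * pent_tri_form j (2 * s - j) + 2"
    by (simp add: pent_tri_form_def algebra_simps)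
  moreover have "k = 2 * s - j" using s by simp
  ultimately show ?thesis using lift_rep_even[OF s] by simp
next
  case False
  then have "even (k - j + 1)" by simp
  then obtain s where s: "k - j + 1 = 2 * s" by blast
  have "pent_tri_form s (s + 8 * j - 2) = 4 * pent_tri_form j (2 * s + j - 1) + 2"
    by (simp add: pent_tri_form_def algebra_simps)
  moreover have "k = 2 * s + j - 1" using s by simp
  ultimately show ?thesis using lift_rep_odd[OF s] by simp
qed

lemma lower_lift_rep: "lower_rep (lift_rep (j, k)) = (j, k)"
proof (cases "even (k + j)")
  case True
  then obtain s where s: "k + j = 2 * s" by blast
  have "1 - (- s) - (s - 8 * j + 1) = 8 * j" by simp
  then show ?thesis using s by (simp add: lift_rep_even[OF s] lower_rep_def)
next
  case False
  then have "even (k - j + 1)" by simp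
  then obtain s where s: "k - j + 1 = 2 * s" by blast
  have odd: "1 - s - (s + 8 * j - 2) = 2 * (1 - s - 4 * j) + 1" by simp
  have "\<not> 8 dvd 1 - s - (s + 8 * j - 2)"
  proof
    assume "8 dvd 1 - s - (s + 8 * j - 2)"
    then have "2 dvd 1 - s - (s + 8 * j - 2)" by (rule dvd_trans[rotated]) simp
    then show False unfolding odd by simp
  qed
  then show ?thesis using s by (simp add: lift_rep_odd[OF s] lower_rep_def)
qed

lemma eight_dvd_of_odd_factor:
  assumes "odd (a::int)" "8 dvd a * c" shows "8 dvd c"
proof -
  obtain t where t: "a = 2 * t + 1" using assms(1) by (metis oddE)
  have "even (t * (t + 1))" by simp
  then obtain u where u: "t * (t + 1) = 2 * u" by blast
  have "a * a - 1 = 8 * u" using t u by (simp add: algebra_simps)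
  then have "8 dvd (a * a - 1) * c" by simp
  moreover have "8 dvd a * (a * c)" using assms(2) by (rule dvd_mult)
  ultimately have "8 dvd a * (a * c) - (a * a - 1) * c" by (rule dvd_diff[rotated])
  moreover have "a * (a * c) - (a * a - 1) * c = c" by (simp add: algebra_simps)
  ultimately show ?thesis by simp
qed

text \<open>Since $(K - 9J + 2)(K + 9J - 1) \equiv 0 \pmod 8$ and its two factors have opposite
  parity, one of them is divisible by $8$.\<close>
lemma pent_tri_form_dvd_8_cases:
  assumes "pent_tri_form J K = 8 * m + 2"
  shows "8 dvd 1 - J - K \<or> 8 dvd K - J + 2"
proof -
  have "(K - 9 * J + 2) * (K + 9 * J - 1) = 8 * (m - 12 * J * J + 4 * J)"
    using assms by (simp add: pent_tri_form_def algebra_simps)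
  then have dv: "8 dvd (K - 9 * J + 2) * (K + 9 * J - 1)" by simp
  show ?thesis
  proof (cases "odd (K - 9 * J + 2)")
    case True
    have "8 dvd K + 9 * J - 1" by (rule eight_dvd_of_odd_factor[OF True dv])
    moreover have "1 - J - K = 8 * J - (K + 9 * J - 1)" by simp
    ultimately have "8 dvd 1 - J - K" by (metis dvd_diff dvd_triv_left)
    then show ?thesis ..
  next
    case False
    have "K + 9 * J - 1 = (K - 9 * J + 2) + 2 * (9 * J) - 3" by simp
    then have "odd (K + 9 * J - 1)" using False by simp
    moreover have "8 dvd (K + 9 * J - 1) * (K - 9 * J + 2)" using dv by (simp only: mult.commute)
    ultimately have "8 dvd K - 9 * J + 2" by (rule eight_dvd_of_odd_factor)
    moreover have "K - J + 2 = (K - 9 * J + 2) + 8 * J" by simp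
    ultimately have "8 dvd K - J + 2" by (metis dvd_add dvd_triv_left)
    then show ?thesis ..
  qed
qed

lemma lift_lower_rep:
  assumes "pent_tri_form J K = 8 * m + 2" shows "lift_rep (lower_rep (J, K)) = (J, K)"
proof (cases "8 dvd 1 - J - K")
  case True
  then obtain j where j: "1 - J - K = 8 * j" by blast
  then have "lower_rep (J, K) = (j, - 2 * J - j)" by (simp add: lower_rep_def)
  moreover have "lift_rep (j, - 2 * J - j) = (J, K)"
    using lift_rep_even[of "- 2 * J - j" j "- J"] j by simp
  ultimately show ?thesis by simp
next
  case False
  then obtain j where j: "K - J + 2 = 8 * j" using pent_tri_form_dvd_8_cases[OF assms] by blast
  then have "lower_rep (J, K) = (j, 2 * J - 1 + j)" using False by (simp add: lower_rep_def)
  moreover have "lift_rep (j, 2 * J - 1 + j) = (J, K)"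
    using lift_rep_odd[of "2 * J - 1 + j" j J] j by simp
  ultimately show ?thesis by simp
qed

lemma card_pent_tri_reps_4_1: "card (pent_tri_reps (4 * m + 1)) = card (pent_tri_reps m)"
proof -
  have lift: "p \<in> pent_tri_reps m \<longleftrightarrow> lift_rep p \<in> pent_tri_reps (4 * m + 1)" for p
    using pent_tri_form_lift_rep[of "fst p" "snd p"]
      mem_pent_tri_reps_iff[of "fst p" "snd p"] mem_pent_tri_reps_iff[of "fst (lift_rep p)" "snd (lift_rep p)"]
    by simp
  have "bij_betw lift_rep (pent_tri_reps m) (pent_tri_reps (4 * m + 1))"
  proof (rule bij_betw_byWitness[where f' = lower_rep])
    show "\<forall>p\<in>pent_tri_reps m. lower_rep (lift_rep p) = p"
      by (auto simp: lower_lift_rep)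
    show lower: "\<forall>p\<in>pent_tri_reps (4 * m + 1). lift_rep (lower_rep p) = p"
      by (auto simp: mem_pent_tri_reps_iff intro: lift_lower_rep)
    show "lift_rep ` pent_tri_reps m \<subseteq> pent_tri_reps (4 * m + 1)"
      using lift by auto
    show "lower_rep ` pent_tri_reps (4 * m + 1) \<subseteq> pent_tri_reps m"
      using lift lower by (metis image_subsetI)
  qed
  then show ?thesis by (simp add: bij_betw_same_card)
qed

lemma finite_pent_tri_reps_nat: "finite (pent_tri_reps_nat N)"
proof (rule finite_subset)
  show "pent_tri_reps_nat N \<subseteq> {- int N..int N} \<times> {..N + 1}"
  proof
    fix x assume "x \<in> pent_tri_reps_nat N"
    then obtain j k where x: "x = (j, k)" "5 * pent j + tri (int k) = N"
      by (auto simp: pent_tri_reps_nat_def)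
    then show "x \<in> {- int N..int N} \<times> {..N + 1}"
      using abs_le_pent[of j] abs_le_tri[of "int k"] by auto
  qed
qed simp

lemma card_pent_tri_reps_eq_nat: "card (pent_tri_reps N) = 2 * card (pent_tri_reps_nat N)"
proof -
  define f1 :: "int \<times> nat \<Rightarrow> int \<times> int" where "f1 = (\<lambda>(j, k). (j, int k))"
  define f2 :: "int \<times> nat \<Rightarrow> int \<times> int" where "f2 = (\<lambda>(j, k). (j, - 1 - int k))"
  have "pent_tri_reps N = f1 ` pent_tri_reps_nat N \<union> f2 ` pent_tri_reps_nat N"
  proof (intro equalityI subsetI)
    fix x assume x: "x \<in> pent_tri_reps N"
    obtain j k where jk: "x = (j, k)" by (cases x)
    show "x \<in> f1 ` pent_tri_reps_nat N \<union> f2 ` pent_tri_reps_nat N"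
    proof (cases "k \<ge> 0")
      case True
      then have "(j, nat k) \<in> pent_tri_reps_nat N" "x = f1 (j, nat k)"
        using x jk by (auto simp: pent_tri_reps_def pent_tri_reps_nat_def f1_def)
      then show ?thesis by blast
    next
      case False
      then have "(j, nat (- 1 - k)) \<in> pent_tri_reps_nat N" "x = f2 (j, nat (- 1 - k))"
        using x jk tri_minus_one_minus[of k] by (auto simp: pent_tri_reps_def pent_tri_reps_nat_def f2_def)
      then show ?thesis by blast
    qed
  qed (auto simp: pent_tri_reps_def pent_tri_reps_nat_def f1_def f2_def tri_minus_one_minus)
  moreover have "card (f1 ` pent_tri_reps_nat N \<union> f2 ` pent_tri_reps_nat N)
      = card (f1 ` pent_tri_reps_nat N) + card (f2 ` pent_tri_reps_nat N)"
    by (rule card_Un_disjoint) (use finite_pent_tri_reps_nat in \<open>auto simp: f1_def f2_def\<close>)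
  moreover have "inj f1" "inj f2"
    by (auto simp: inj_def f1_def f2_def)
  ultimately show ?thesis
    by (simp add: card_image inj_on_subset)
qed

lemma card_pent_tri_reps_nat_4_1: "card (pent_tri_reps_nat (4 * m + 1)) = card (pent_tri_reps_nat m)"
  using card_pent_tri_reps_4_1[of m] by (simp add: card_pent_tri_reps_eq_nat)

lemma fibre_fps_pent_tri:
  "fps_dilate 5 euler_fps * (euler_fps * euler_fps * euler_fps)
     = (fibre_fps (\<lambda>(j, k). 5 * pent j + tri (int k)) :: bit fps)"
  using finite_pent_eq[of 5] finite_tri_eq
  by (simp add: euler_fps_bit euler_fps_cube_bit[unfolded euler_fps_bit] fps_dilate_fibre_fps fibre_fps_mult)

lemma fibre_fps_two_pent_five_pent:
  "fps_dilate 2 euler_fps * fps_dilate 5 euler_fps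
     = (fibre_fps (\<lambda>(i, j). 2 * pent i + 5 * pent j) :: bit fps)"
  using finite_pent_eq[of 2] finite_pent_eq[of 5]
  by (simp add: euler_fps_bit fps_dilate_fibre_fps fibre_fps_mult)

text \<open>Modulo 2, $f(-q)^4 = f(-q^4)$, so $B \cdot f(-q^4) = f(-q^5) f(-q)^3$ for the generating
  function $B$ of $b_5$. The coefficients of the right side at $4n+1$ and $n$ agree; extracting
  the terms of index $\equiv 1 \pmod 4$ therefore gives
  $U(B) \cdot f(-q) = f(-q^5) f(-q)^3 = f(-q) \cdot f(-q^2) f(-q^5)$.\<close>
lemma fps_section_b_fps_5:
  "fps_section 4 1 (b_fps 5 :: bit fps) = fps_dilate 2 euler_fps * fps_dilate 5 euler_fps"
proof -
  let ?F = "euler_fps :: bit fps"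
  define H where "H = fps_dilate 5 ?F * (?F * ?F * ?F)"
  have "?F * ?F * ?F * ?F = fps_dilate 4 ?F"
    using fps_dilate_dilate[of 2 2 ?F] by (simp add: fps_square_bit[symmetric] ac_simps)
  then have "b_fps 5 * fps_dilate 4 ?F = (b_fps 5 * ?F) * (?F * ?F * ?F)"
    by (simp flip: mult.assoc)
  also have "b_fps 5 * ?F = fps_dilate 5 ?F"
    by (rule b_fps_mult_euler_fps) simp
  finally have "b_fps 5 * fps_dilate 4 ?F = H"
    unfolding H_def .
  then have "fps_section 4 1 (b_fps 5) * ?F = fps_section 4 1 H"
    using fps_section_mult_dilate[of 1 4 "b_fps 5" ?F] by simp
  also have "fps_section 4 1 H = H"
    using card_pent_tri_reps_nat_4_1
    by (simp add: fps_eq_iff fps_section_def H_def fibre_fps_pent_tri fibre_fps_def pent_tri_reps_nat_def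
        case_prod_beta')
  also have "H = (fps_dilate 2 ?F * fps_dilate 5 ?F) * ?F"
    by (simp add: H_def fps_square_bit[symmetric] ac_simps)
  finally show ?thesis
    using euler_fps_nonzero[where 'a = bit] by simp
qed

lemma dilate_euler_2_5_nth_25_7:
  "(fps_dilate 2 euler_fps * fps_dilate 5 euler_fps :: bit fps) $ (25 * n + 7)
     = (fps_dilate 2 euler_fps * fps_dilate 5 euler_fps) $ n"
  using card_two_pent_five_pent[of n]
  by (simp add: fibre_fps_two_pent_five_pent fibre_fps_def case_prod_beta')


lemma seven_times_25_power_mod_6: "(7 * 25 ^ a) mod 6 = (1::nat)"
proof (induction a)
  case (Suc a)
  have "(7 * 25 ^ Suc a) mod 6 = (25 * ((7 * 25 ^ a) mod 6)) mod (6::nat)"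
    by (simp add: mod_mult_right_eq ac_simps)
  then show ?case by (simp add: Suc.IH)
qed simp

lemma seven_times_25_power_div_6: "6 * ((7 * 25 ^ a - 1) div 6) + 1 = (7 * 25 ^ a :: nat)"
proof -
  obtain q where "7 * 25 ^ a = 6 * q + (1::nat)"
    using div_mult_mod_eq[of "7 * 25 ^ a :: nat" 6] seven_times_25_power_mod_6[of a] by (metis mult.commute)
  then show ?thesis by simp
qed

lemma b_fps_5_nth:
  "(b_fps 5 :: bit fps) $ (4 * 25 ^ a * n + (7 * 25 ^ a - 1) div 6)
     = (fps_dilate 2 euler_fps * fps_dilate 5 euler_fps) $ n"
proof (induction a arbitrary: n)
  case 0
  have "(b_fps 5 :: bit fps) $ (4 * n + 1) = fps_section 4 1 (b_fps 5) $ n"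
    by (simp add: fps_section_def)
  also have "\<dots> = (fps_dilate 2 euler_fps * fps_dilate 5 euler_fps) $ n"
    by (simp only: fps_section_b_fps_5)
  finally show ?case by simp
next
  case (Suc a)
  define c where "c = (7 * 25 ^ a - 1) div (6::nat)"
  define c' where "c' = (7 * 25 ^ Suc a - 1) div (6::nat)"
  have "6 * c + 1 = 7 * 25 ^ a" "6 * c' + 1 = 7 * 25 ^ Suc a"
    unfolding c_def c'_def by (rule seven_times_25_power_div_6)+
  then have "4 * 25 ^ Suc a * n + c' = 4 * 25 ^ a * (25 * n + 7) + c"
    by (simp add: algebra_simps)
  then show ?case
    unfolding c_def c'_def
    using Suc.IH[of "25 * n + 7"] by (simp add: dilate_euler_2_5_nth_25_7)
qed

lemma of_int_bit: "(of_int x :: bit) = of_bool (odd x)"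
  by (cases "even x") (auto elim!: evenE oddE)

lemma fprod_coeff_bit: "(of_int (fprod_coeff 2 5 n) :: bit) = (fps_dilate 2 euler_fps * fps_dilate 5 euler_fps) $ n"
proof -
  have "euler_trunc a n = qpoch (fps_X ^ a) n" for a
    by (simp add: euler_trunc_def qpoch_def power_mult)
  moreover have "fps_of_int (qpoch (fps_X ^ a) n) = qpoch (fps_X ^ a :: bit fps) n" for a
    by (simp add: qpoch_def fps_of_int_prod flip: power_mult)
  ultimately have "(of_int (fprod_coeff 2 5 n) :: bit) = (qpoch (fps_X ^ 2) n * qpoch (fps_X ^ 5) n) $ n"
    by (simp only: fprod_coeff_def fps_of_int_nth[symmetric] fps_of_int_mult)
  also have "\<dots> = (fps_dilate 2 (qpoch fps_X n) * fps_dilate 5 (qpoch fps_X n)) $ n"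
    by (simp add: qpoch_X_power_eq_dilate)
  also have "\<dots> = (fps_dilate 2 euler_fps * fps_dilate 5 euler_fps) $ n"
  proof -
    have "fps_agree n (fps_dilate 2 (qpoch fps_X n) * fps_dilate 5 (qpoch fps_X n))
        (fps_dilate 2 euler_fps * fps_dilate 5 (euler_fps :: bit fps))"
      by (intro fps_agree_mult) (auto simp: fps_agree_def fps_dilate_nth qpoch_X_nth_eq_euler_fps)
    then show ?thesis by (simp add: fps_agree_def)
  qed
  finally show ?thesis .
qed

theorem lemma3p19:
  fixes \<alpha> n :: nat
  shows "[int (b 5 (4 * 5 ^ (2 * \<alpha>) * n + (7 * 5 ^ (2 * \<alpha>) - 1) div 6))
          = fprod_coeff 2 5 n] (mod 2)"
proof -
  have "(of_int (int (b 5 (4 * 5 ^ (2 * \<alpha>) * n + (7 * 5 ^ (2 * \<alpha>) - 1) div 6))) :: bit)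
      = of_int (fprod_coeff 2 5 n)"
    using b_fps_5_nth[of \<alpha> n] by (simp add: fprod_coeff_bit b_fps_def power_mult)
  then show ?thesis
    by (auto simp: of_int_bit cong_def mod2_eq_if split: if_splits)
qed
end
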